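(* Let $P_-:\hat{\mathcal G}^\ast_1\to\mathbb C$, $P_-(\hat{\mathfrak L})=-\frac14(\!(\hat{\mathfrak L},\hat{\mathfrak L})\!)_\phi$, and $\partial_-=\{\cdot,P_-\}_R$. Let $\hat{\mathfrak L}=(\mathfrak L,1)$ where $\mathfrak L$ is the Lax matrix \[ \mathfrak L=4\,\phi(z)^{-1}\sum_{k=1}^\infty z^k\big(k A_1^{(k)}+2(\nabla_1\Pi_1)^{(k)}\big) \] for arbitrary $A_1,\Pi_1\in C^\infty(S^1,\mathfrak g)$, with $\nabla_1=\partial_\sigma-[A_1,\cdot\,]$. Then, although $P_-\notin\mathcal I(\hat{\mathcal G}^\ast_1)$, the flow $\partial_-$ at $\hat{\mathfrak L}$ satisfies \[ \partial_- \mathfrak{L} - \partial_{\sigma} \mathfrak{L}_- = [\mathfrak{L}_-, \mathfrak{L}], \qquad \mathfrak{L}_- = \pi_- \mathfrak{L}. \]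
   Context: Setting: $\mathring{\mathfrak g}$ is a Lie superalgebra with automorphism $\Omega$, $\Omega^4=1$, eigenspaces $\mathring{\mathfrak g}_n$, and a non-degenerate invariant graded-symmetric form with $\langle \mathring{\mathfrak g}_n,\mathring{\mathfrak g}_m\rangle=0$ unless $n+m\equiv0\pmod4$; $\mathfrak g=(\Gamma\otimes\mathring{\mathfrak g})_{\bar0}$ its Grassmann envelope, graded $\mathfrak g=\oplus_{n=0}^3\mathfrak g_n$; for $b\in\mathfrak g$, $b^{(k)}$ is its component in $\mathfrak g_{(k)}$, $(k)=k\bmod4$. $\mathcal L\mathfrak g^\Omega=\bigoplus_{n\in\mathbb Z}\mathfrak g_{(n)}z^n$ (formal Laurent series, finitely many negative powers), $\mathcal L\mathfrak g^\Omega_+=\bigoplus_{n\ge0}$, $\mathcal L\mathfrak g^\Omega_-=\bigoplus_{n<0}$, projections $\pi_\pm$, $R=\pi_+-\pi_-$. $\phi(z)=\frac{16z^4}{(1-z^4)^2}$ (so $\phi^{-1}=\frac1{16}z^4-\frac18+\frac1{16}z^{-4}$), $(X,Y)_\phi=\oint\frac{dz}{2\pi iz}\phi\langle X,Y\rangle$. $\mathcal G=C^\infty(S^1,\mathcal L\mathfrak g^\Omega)$ with $(\!(\mathfrak X,\mathfrak Y)\!)_\phi=\int_{S^1}d\sigma(\mathfrak X,\mathfrak Y)_\phi$, cocycle $\omega(\mathfrak X,\mathfrak Y)=\int d\sigma(\mathfrak X,\partial_\sigma\mathfrak Y)_\phi$; $\hat{\mathcal G}=\mathcal G\oplus\mathbb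 C$ with bracket $[(\mathfrak X,a),(\mathfrak Y,b)]=([\mathfrak X,\mathfrak Y],\omega(\mathfrak X,\mathfrak Y))$, pairing $(\!((\mathfrak X,a),(\mathfrak Y,b))\!)_\phi=(\!(\mathfrak X,\mathfrak Y)\!)_\phi+ab$, smooth dual $\hat{\mathcal G}^\ast\simeq\phi^{-1}\mathcal G\oplus\mathbb C$, $\hat{\mathcal G}^\ast_1=\phi^{-1}\mathcal G\oplus\{1\}$. $R(\mathfrak X,c)=(R\mathfrak X,c)$ ($R$ pointwise in $\sigma$), $R$-bracket $[\hat{\mathfrak X},\hat{\mathfrak Y}]_R=\frac12([R\hat{\mathfrak X},\hat{\mathfrak Y}]+[\hat{\mathfrak X},R\hat{\mathfrak Y}])$. For $f$ a smooth function, $\hat df=(df,c_f)$ is defined by $(\!((\mathfrak X,b),\hat df)\!)_\phi=\frac{d}{dt}|_{t=0}f((\mathfrak L,a)+t(\mathfrak X,b))$. The $R$-bracket of functions is $\frac12\{f,g\}_R(\hat{\mathfrak L})=(\!(\hat{\mathfrak L},[\hat df,\hat dg]_R)\!)_\phi$; the flow $\partial_-$ acts on $\hat{\mathfrak L}$ via $\partial_-(\!(\hat{\mathfrak L},\hat{\mathfrak X})\!)_\phi=\{\hat{\mathfrak X},P_-\}_R(\hat{\mathfrak L})$ for all linear functions. $\mathcal I(\hat{\mathcal G}^\ast_1)$ denotes functions $f$ with $ad^\ast df\cdot\hat{\mathfrak L}=0$ for all $\hat{\mathfrak L}$, where $ad^\ast\mathfrak M\cdot(\mathfrak X,1)=([\mathfrak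 M,\mathfrak X]+\partial_\sigma\mathfrak M,0)$. *)

theory Defs
  imports "HOL-Analysis.Analysis"
begin

text \<open>br = Lie bracket of g, fm = invariant symmetric form (complex valued),
  pr n = projection onto g_(n mod 4), i.e. pr n b = b^(n).\<close>

definition lie_data ::
  "('g::real_normed_vector \<Rightarrow> 'g \<Rightarrow> 'g) \<Rightarrow> ('g \<Rightarrow> 'g \<Rightarrow> complex) \<Rightarrow> (int \<Rightarrow> 'g \<Rightarrow> 'g) \<Rightarrow> bool"
  where "lie_data br fm pr \<longleftrightarrow>
     bounded_bilinear br \<and>
     (\<forall>x y. br x y = - br y x) \<and>
     (\<forall>x y z. br x (br y z) + br y (br z x) + br z (br x y) = 0) \<and>
     bounded_bilinear fm \<and>
     (\<forall>x y. fm x y = fm y x) \<and>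
     (\<forall>x y z. fm (br x y) z = fm x (br y z)) \<and>
     (\<forall>x. (\<forall>y. fm x y = 0) \<longrightarrow> x = 0) \<and>
     (\<forall>n. bounded_linear (pr n)) \<and>
     (\<forall>n m. n mod 4 = m mod 4 \<longrightarrow> pr n = pr m) \<and>
     (\<forall>n x. pr n (pr n x) = pr n x) \<and>
     (\<forall>n m x. n mod 4 \<noteq> m mod 4 \<longrightarrow> pr n (pr m x) = 0) \<and>
     (\<forall>x. pr 0 x + pr 1 x + pr 2 x + pr 3 x = x) \<and>
     (\<forall>n m x y. pr (n + m) (br (pr n x) (pr m y)) = br (pr n x) (pr m y)) \<and>
     (\<forall>n m x y. (n + m) mod 4 \<noteq> 0 \<longrightarrow> fm (pr n x) (pr m y) = 0)"

text \<open>A Laurent series is a coefficient function int => _; products are Cauchy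
  convolutions, which are finite sums when both factors have finitely many negative powers.\<close>

definition conv :: "('a::zero \<Rightarrow> 'b::zero \<Rightarrow> 'c::comm_monoid_add) \<Rightarrow> (int \<Rightarrow> 'a) \<Rightarrow> (int \<Rightarrow> 'b) \<Rightarrow> int \<Rightarrow> 'c"
  where "conv f X Y n = (\<Sum>i \<in> {i. X i \<noteq> 0 \<and> Y (n - i) \<noteq> 0}. f (X i) (Y (n - i)))"

text \<open>phi(z) = 16 z^4/(1-z^4)^2 = sum_{j>=1} 16 j z^(4j), and its inverse
  phi^{-1} = z^4/16 - 1/8 + z^(-4)/16.\<close>

definition phi :: "int \<Rightarrow> real"
  where "phi n = (if 0 < n \<and> 4 dvd n then 16 * real_of_int (n div 4) else 0)"

definition phi_inv :: "int \<Rightarrow> real"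
  where "phi_inv n = (if n = 4 \<or> n = -4 then 1/16 else if n = 0 then -1/8 else 0)"

definition pi_plus :: "(int \<Rightarrow> 'g::zero) \<Rightarrow> int \<Rightarrow> 'g"
  where "pi_plus X n = (if 0 \<le> n then X n else 0)"

definition pi_minus :: "(int \<Rightarrow> 'g::zero) \<Rightarrow> int \<Rightarrow> 'g"
  where "pi_minus X n = (if n < 0 then X n else 0)"

definition Rop :: "(int \<Rightarrow> 'g::ab_group_add) \<Rightarrow> int \<Rightarrow> 'g"
  where "Rop X n = pi_plus X n - pi_minus X n"

definition phi_pair :: "('g::zero \<Rightarrow> 'g \<Rightarrow> complex) \<Rightarrow> (int \<Rightarrow> 'g) \<Rightarrow> (int \<Rightarrow> 'g) \<Rightarrow> complex"
  where "phi_pair fm X Y = conv (\<lambda>a c. complex_of_real a * c) phi (conv fm X Y) 0"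

type_synonym 'g loopf = "real \<Rightarrow> int \<Rightarrow> 'g"

definition smooth_fun :: "(real \<Rightarrow> 'a::real_normed_vector) \<Rightarrow> bool"
  where "smooth_fun f \<longleftrightarrow> (\<exists>D. D 0 = f \<and> (\<forall>k t. (D k has_vector_derivative D (Suc k) t) (at t)))"

definition smooth_S1 :: "(real \<Rightarrow> 'a::real_normed_vector) \<Rightarrow> bool"
  where "smooth_S1 f \<longleftrightarrow> smooth_fun f \<and> (\<forall>s. f (s + 2 * pi) = f s)"

text \<open>G = C^infty(S^1, L g^Omega): coefficientwise smooth, graded coefficients,
  uniformly finitely many negative powers.\<close>
definition in_G :: "(int \<Rightarrow> 'g \<Rightarrow> 'g) \<Rightarrow> 'g::real_normed_vector loopf \<Rightarrow> bool"
  where "in_G pr X \<longleftrightarrow> (\<exists>N. \<forall>s n. n < N \<longrightarrow> X s n = 0) \<and>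
                      (\<forall>s n. pr n (X s n) = X s n) \<and>
                      (\<forall>n. smooth_S1 (\<lambda>s. X s n))"

definition dsig :: "'g::real_normed_vector loopf \<Rightarrow> 'g loopf"
  where "dsig X = (\<lambda>s n. vector_derivative (\<lambda>t. X t n) (at s))"

definition Gbr :: "('g \<Rightarrow> 'g \<Rightarrow> 'g::real_normed_vector) \<Rightarrow> 'g loopf \<Rightarrow> 'g loopf \<Rightarrow> 'g loopf"
  where "Gbr br X Y = (\<lambda>s. conv br (X s) (Y s))"

definition GR :: "'g::real_normed_vector loopf \<Rightarrow> 'g loopf"
  where "GR X = (\<lambda>s. Rop (X s))"

definition Gpair :: "('g \<Rightarrow> 'g \<Rightarrow> complex) \<Rightarrow> 'g::real_normed_vector loopf \<Rightarrow> 'g loopf \<Rightarrow> complex"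
  where "Gpair fm X Y = integral {0..2*pi} (\<lambda>s. phi_pair fm (X s) (Y s))"

definition omega :: "('g \<Rightarrow> 'g \<Rightarrow> complex) \<Rightarrow> 'g::real_normed_vector loopf \<Rightarrow> 'g loopf \<Rightarrow> complex"
  where "omega fm X Y = Gpair fm X (dsig Y)"

type_synonym 'g hat = "'g loopf \<times> complex"

definition in_Ghat :: "(int \<Rightarrow> 'g \<Rightarrow> 'g) \<Rightarrow> 'g::real_normed_vector hat \<Rightarrow> bool"
  where "in_Ghat pr Xh \<longleftrightarrow> in_G pr (fst Xh)"

definition hadd :: "'g::real_normed_vector hat \<Rightarrow> 'g hat \<Rightarrow> 'g hat"
  where "hadd Xh Yh = ((\<lambda>s n. fst Xh s n + fst Yh s n), snd Xh + snd Yh)"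

definition hscale :: "real \<Rightarrow> 'g::real_normed_vector hat \<Rightarrow> 'g hat"
  where "hscale t Xh = ((\<lambda>s n. t *\<^sub>R fst Xh s n), complex_of_real t * snd Xh)"

definition hbr :: "('g \<Rightarrow> 'g \<Rightarrow> 'g) \<Rightarrow> ('g \<Rightarrow> 'g \<Rightarrow> complex) \<Rightarrow> 'g::real_normed_vector hat \<Rightarrow> 'g hat \<Rightarrow> 'g hat"
  where "hbr br fm Xh Yh = (Gbr br (fst Xh) (fst Yh), omega fm (fst Xh) (fst Yh))"

definition hpair :: "('g \<Rightarrow> 'g \<Rightarrow> complex) \<Rightarrow> 'g::real_normed_vector hat \<Rightarrow> 'g hat \<Rightarrow> complex"
  where "hpair fm Xh Yh = Gpair fm (fst Xh) (fst Yh) + snd Xh * snd Yh"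

definition hR :: "'g::real_normed_vector hat \<Rightarrow> 'g hat"
  where "hR Xh = (GR (fst Xh), snd Xh)"

definition hRbr :: "('g \<Rightarrow> 'g \<Rightarrow> 'g) \<Rightarrow> ('g \<Rightarrow> 'g \<Rightarrow> complex) \<Rightarrow> 'g::real_normed_vector hat \<Rightarrow> 'g hat \<Rightarrow> 'g hat"
  where "hRbr br fm Xh Yh = hscale (1/2) (hadd (hbr br fm (hR Xh) Yh) (hbr br fm Xh (hR Yh)))"

definition is_hgrad :: "(int \<Rightarrow> 'g \<Rightarrow> 'g) \<Rightarrow> ('g \<Rightarrow> 'g \<Rightarrow> complex) \<Rightarrow> ('g::real_normed_vector hat \<Rightarrow> complex) \<Rightarrow> 'g hat \<Rightarrow> 'g hat \<Rightarrow> bool"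
  where "is_hgrad pr fm f Lh D \<longleftrightarrow> in_Ghat pr D \<and>
     (\<forall>Xh. in_Ghat pr Xh \<longrightarrow>
        ((\<lambda>t. f (hadd Lh (hscale t Xh))) has_vector_derivative hpair fm Xh D) (at 0))"

definition hgrad :: "(int \<Rightarrow> 'g \<Rightarrow> 'g) \<Rightarrow> ('g \<Rightarrow> 'g \<Rightarrow> complex) \<Rightarrow> ('g::real_normed_vector hat \<Rightarrow> complex) \<Rightarrow> 'g hat \<Rightarrow> 'g hat"
  where "hgrad pr fm f Lh = (THE D. is_hgrad pr fm f Lh D)"

definition Rpoisson :: "('g \<Rightarrow> 'g \<Rightarrow> 'g) \<Rightarrow> ('g \<Rightarrow> 'g \<Rightarrow> complex) \<Rightarrow> (int \<Rightarrow> 'g \<Rightarrow> 'g) \<Rightarrow>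
    ('g::real_normed_vector hat \<Rightarrow> complex) \<Rightarrow> ('g hat \<Rightarrow> complex) \<Rightarrow> 'g hat \<Rightarrow> complex"
  where "Rpoisson br fm pr f g Lh = 2 * hpair fm Lh (hRbr br fm (hgrad pr fm f Lh) (hgrad pr fm g Lh))"

definition P_minus :: "('g \<Rightarrow> 'g \<Rightarrow> complex) \<Rightarrow> 'g::real_normed_vector hat \<Rightarrow> complex"
  where "P_minus fm Lh = - (1/4) * hpair fm Lh Lh"

definition lax :: "('g \<Rightarrow> 'g \<Rightarrow> 'g) \<Rightarrow> (int \<Rightarrow> 'g \<Rightarrow> 'g) \<Rightarrow> (real \<Rightarrow> 'g) \<Rightarrow> (real \<Rightarrow> 'g) \<Rightarrow> 'g::real_normed_vector loopf"
  where "lax br pr A Pim = (\<lambda>s n. 4 *\<^sub>R conv (\<lambda>a x. a *\<^sub>R x) phi_inv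
     (\<lambda>k. if 1 \<le> k then real_of_int k *\<^sub>R pr k (A s)
              + 2 *\<^sub>R pr k (vector_derivative Pim (at s) - br (A s) (Pim s)) else 0) n)"

end

theory Submission
  imports Defs
begin

text \<open>The gradient of the linear function \<open>((\<cdot>, (X,0)))\<close> is \<open>(X,0)\<close> and that of \<open>P_-\<close>
  at \<open>(L,1)\<close> is \<open>(-L/2, -1/2)\<close>; both are unique because the \<open>phi\<close>-pairing on \<open>G\<close> is
  nondegenerate. The \<open>R\<close>-bracket then has a loop part and a central part. By invariance of the
  form and \<open>((L, [Y,L])) = 0\<close>, the loop part reduces to \<open>(([L_-, L], X))\<close>. Since \<open>phi\<close> starts
  with \<open>16 z^4\<close> and \<open>\<partial>\<^sub>\<sigma> L\<close> has no powers below \<open>z^-3\<close>, the positive part of \<open>X\<close> pairs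
  trivially with \<open>\<partial>\<^sub>\<sigma> L\<close>, and the two cocycle terms add up to \<open>((\<partial>\<^sub>\<sigma> L_-, X))\<close>.
  So the identity holds for every \<open>L \<in> G\<close> without powers below \<open>z^-3\<close>, and the Lax matrix is
  such an element because \<open>phi^-1\<close> starts with \<open>z^-4\<close>.\<close>

section \<open>Laurent series and the \<open>phi\<close>-pairing\<close>

definition vanishes_below :: "(int \<Rightarrow> 'a::zero) \<Rightarrow> int \<Rightarrow> bool"
  where "vanishes_below X N \<longleftrightarrow> (\<forall>n<N. X n = 0)"

lemma vanishes_below_mono: "vanishes_below X N \<Longrightarrow> M \<le> N \<Longrightarrow> vanishes_below X M"
  unfolding vanishes_below_def by auto

lemma vanishes_below_lincomb:
  fixes X Y :: "int \<Rightarrow> 'a::real_vector"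
  shows "vanishes_below X N \<Longrightarrow> vanishes_below Y N \<Longrightarrow> vanishes_below (\<lambda>n. a *\<^sub>R X n + b *\<^sub>R Y n) N"
  unfolding vanishes_below_def by auto

lemma vanishes_below_pi_minus: "vanishes_below X N \<Longrightarrow> vanishes_below (pi_minus X) N"
  unfolding vanishes_below_def pi_minus_def by auto

lemma vanishes_below_pi_plus: "vanishes_below X N \<Longrightarrow> vanishes_below (pi_plus X) N"
  unfolding vanishes_below_def pi_plus_def by auto

lemma vanishes_below_Rop: "vanishes_below X N \<Longrightarrow> vanishes_below (Rop X) N"
  unfolding vanishes_below_def Rop_def pi_plus_def pi_minus_def by auto

lemma pi_plus_add_pi_minus: "(X :: int \<Rightarrow> 'a::monoid_add) = (\<lambda>n. pi_plus X n + pi_minus X n)"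
  by (auto simp: fun_eq_iff pi_plus_def pi_minus_def)

lemma Rop_scaleR:
  fixes X :: "int \<Rightarrow> 'a::real_vector"
  shows "Rop (\<lambda>n. c *\<^sub>R X n) = (\<lambda>n. c *\<^sub>R X n + (-2*c) *\<^sub>R pi_minus X n)"
  by (auto simp: fun_eq_iff Rop_def pi_plus_def pi_minus_def scaleR_left_diff_distrib[symmetric])

lemma conv_eq_sum_interval:
  assumes "vanishes_below X N1" "vanishes_below Y N2" "\<And>y. f 0 y = 0" "\<And>x. f x 0 = 0"
  shows "conv f X Y n = (\<Sum>i\<in>{N1..n-N2}. f (X i) (Y (n-i)))"
  unfolding conv_def
proof (rule sum.mono_neutral_left)
  show "{i. X i \<noteq> 0 \<and> Y (n - i) \<noteq> 0} \<subseteq> {N1..n - N2}"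
    using assms(1,2) unfolding vanishes_below_def by (force simp: not_less[symmetric])
qed (use assms in auto)

lemma vanishes_below_conv:
  assumes "vanishes_below X N1" "vanishes_below Y N2" "\<And>y. f 0 y = 0" "\<And>x. f x 0 = 0"
  shows "vanishes_below (conv f X Y) (N1+N2)"
  unfolding vanishes_below_def using conv_eq_sum_interval[of X N1 Y N2 f, OF assms] by auto

lemma conv_commute: "conv f X Y n = conv (\<lambda>y x. f x y) Y X n"
  unfolding conv_def
  by (rule sum.reindex_bij_witness[of _ "\<lambda>i. n - i" "\<lambda>i. n - i"]) auto

lemma conv_single_left:
  assumes "\<And>y. f 0 y = 0" "\<And>x. f x 0 = 0"
  shows "conv f (\<lambda>n. if n = m then y else 0) Y k = f y (Y (k - m))"
proof -
  have "conv f (\<lambda>n. if n = m then y else 0) Y k = (\<Sum>i\<in>{m}. f (if i = m then y else 0) (Y (k - i)))"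
    unfolding conv_def by (rule sum.mono_neutral_left) (auto simp: assms)
  then show ?thesis by simp
qed

lemma conv_antisym:
  fixes br :: "'a::zero \<Rightarrow> 'a \<Rightarrow> 'b::ab_group_add"
  assumes "\<And>x y. br x y = - br y x"
  shows "conv br X Y m = - conv br Y X m"
  unfolding conv_commute[of br X] unfolding conv_def
  by (subst sum_negf[symmetric]) (intro sum.cong refl assms)

lemma conv_lincomb_left:
  assumes "bounded_bilinear f" "vanishes_below X N" "vanishes_below X' N" "vanishes_below Y N"
  shows "conv f (\<lambda>n. a *\<^sub>R X n + b *\<^sub>R X' n) Y m = a *\<^sub>R conv f X Y m + b *\<^sub>R conv f X' Y m"
proof -
  interpret bounded_bilinear f by fact
  have z: "\<And>y. f 0 y = 0" "\<And>x. f x 0 = 0" by (auto simp: zero_left zero_right)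
  show ?thesis
    using assms(2-4)
    by (simp add: conv_eq_sum_interval[of _ N Y N f, OF _ _ z] vanishes_below_lincomb
        add_left scaleR_left sum.distrib scaleR_sum_right)
qed

lemma conv_lincomb_right:
  assumes "bounded_bilinear f" "vanishes_below X N" "vanishes_below Y N" "vanishes_below Y' N"
  shows "conv f X (\<lambda>n. a *\<^sub>R Y n + b *\<^sub>R Y' n) m = a *\<^sub>R conv f X Y m + b *\<^sub>R conv f X Y' m"
proof -
  interpret bounded_bilinear f by fact
  have z: "\<And>y. f 0 y = 0" "\<And>x. f x 0 = 0" by (auto simp: zero_left zero_right)
  show ?thesis
    using assms(2-4)
    by (simp add: conv_eq_sum_interval[of X N _ N f, OF _ _ z] vanishes_below_lincomb
        add_right scaleR_right sum.distrib scaleR_sum_right)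
qed

lemma conv_invariant:
  assumes br: "bounded_bilinear br" and fm: "bounded_bilinear fm"
    and inv: "\<And>x y z. fm (br x y) z = fm x (br y z)"
    and X: "vanishes_below X N" and Y: "vanishes_below Y N" and Z: "vanishes_below Z N"
  shows "conv fm X (conv br Y Z) m = conv fm (conv br X Y) Z m"
proof -
  interpret b: bounded_bilinear br by (rule br)
  interpret f: bounded_bilinear fm by (rule fm)
  have zb: "\<And>y. br 0 y = 0" "\<And>x. br x 0 = 0" by (auto simp: b.zero_left b.zero_right)
  have zf: "\<And>y. fm 0 y = 0" "\<And>x. fm x 0 = 0" by (auto simp: f.zero_left f.zero_right)
  note YZ = vanishes_below_conv[of Y N Z N br, OF Y Z zb]
    and XY = vanishes_below_conv[of X N Y N br, OF X Y zb]
  have "conv fm X (conv br Y Z) m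
      = (\<Sum>(j,a)\<in>(SIGMA j:{N..m-(N+N)}. {N..m-j-N}). fm (X j) (br (Y a) (Z (m-j-a))))"
    by (simp add: conv_eq_sum_interval[of X N _ _ fm, OF X YZ zf]
        conv_eq_sum_interval[of Y N Z N br, OF Y Z zb]
        f.sum_right sum.Sigma)
  also have "\<dots> = (\<Sum>(b,j)\<in>(SIGMA b:{N+N..m-N}. {N..b-N}). fm (br (X j) (Y (b-j))) (Z (m-b)))"
    by (rule sum.reindex_bij_witness[of _ "\<lambda>(b,j). (j, b-j)" "\<lambda>(j,a). (j+a, j)"])
       (auto simp: inv algebra_simps)
  also have "\<dots> = conv fm (conv br X Y) Z m"
    by (simp add: conv_eq_sum_interval[of _ _ Z N fm, OF XY Z zf]
        conv_eq_sum_interval[of X N Y N br, OF X Y zb]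
        f.sum_left sum.Sigma)
  finally show ?thesis .
qed

lemma vanishes_below_phi: "vanishes_below phi 1"
  unfolding vanishes_below_def phi_def by auto

lemma phi_pair_conv_scaleR: "phi_pair fm X Y = conv scaleR phi (conv fm X Y) 0"
proof -
  have "(\<lambda>a c. complex_of_real a * c) = scaleR" by (auto simp: fun_eq_iff scaleR_conv_of_real)
  then show ?thesis unfolding phi_pair_def by simp
qed

lemma phi_pair_eq_sum:
  assumes "vanishes_below X N" "vanishes_below Y N" "\<And>y. fm 0 y = 0" "\<And>x. fm x 0 = 0"
  shows "phi_pair fm X Y =
    (\<Sum>i\<in>{1..-2*N}. complex_of_real (phi i) * (\<Sum>j\<in>{N..-i-N}. fm (X j) (Y (-i-j))))"
proof -
  have XY: "vanishes_below (conv fm X Y) (N+N)"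
    by (rule vanishes_below_conv[of X N Y N fm, OF assms])
  show ?thesis
    unfolding phi_pair_def
    by (simp add: conv_eq_sum_interval[OF vanishes_below_phi XY]
        conv_eq_sum_interval[of X N Y N fm, OF assms] algebra_simps)
qed

text \<open>Since \<open>phi\<close> starts at \<open>z^4\<close>, the pairing only sees the coefficients of \<open><X,Y>\<close>
  in degrees \<open>\<le> -4\<close>.\<close>
lemma phi_pair_eq_0_if_vanishes_below:
  assumes "vanishes_below (conv fm X Y) (-3)"
  shows "phi_pair fm X Y = 0"
proof -
  have "{i. phi i \<noteq> 0 \<and> conv fm X Y (0 - i) \<noteq> 0} = {}"
    using assms unfolding vanishes_below_def phi_def
    by (auto simp: zdvd_imp_le)
  then show ?thesis unfolding phi_pair_def conv_def[of _ phi "conv fm X Y"] by (simp only: sum.empty)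
qed

lemma phi_pair_lincomb_left:
  assumes fm: "bounded_bilinear fm"
    and "vanishes_below X N" "vanishes_below X' N" "vanishes_below Y N"
  shows "phi_pair fm (\<lambda>n. a *\<^sub>R X n + b *\<^sub>R X' n) Y = a *\<^sub>R phi_pair fm X Y + b *\<^sub>R phi_pair fm X' Y"
proof -
  interpret bounded_bilinear fm by (rule fm)
  have z: "\<And>y. fm 0 y = 0" "\<And>x. fm x 0 = 0" by (auto simp: zero_left zero_right)
  define K where "K = min 1 (N+N)"
  have XY: "vanishes_below (conv fm X Y) K" "vanishes_below (conv fm X' Y) K"
    using vanishes_below_conv[of X N Y N fm, OF assms(2,4) z]
      vanishes_below_conv[of X' N Y N fm, OF assms(3,4) z]
    by (auto simp: K_def elim: vanishes_below_mono)
  have phi: "vanishes_below phi K"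
    using vanishes_below_phi by (rule vanishes_below_mono) (simp add: K_def)
  have "conv fm (\<lambda>n. a *\<^sub>R X n + b *\<^sub>R X' n) Y = (\<lambda>m. a *\<^sub>R conv fm X Y m + b *\<^sub>R conv fm X' Y m)"
    using conv_lincomb_left[OF fm assms(2-4)] by auto
  then show ?thesis
    unfolding phi_pair_conv_scaleR
    by (simp add: conv_lincomb_right[OF bounded_bilinear_scaleR phi XY])
qed

lemma phi_pair_commute:
  assumes "\<And>x y. fm x y = fm y x"
  shows "phi_pair fm X Y = phi_pair fm Y X"
proof -
  have "conv fm X Y = conv fm Y X"
    by (rule ext, subst conv_commute) (simp add: assms)
  then show ?thesis unfolding phi_pair_def by simp
qed

locale graded_lie_data =
  fixes br :: "'g::real_normed_vector \<Rightarrow> 'g \<Rightarrow> 'g" and fm :: "'g \<Rightarrow> 'g \<Rightarrow> complex"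
    and pr :: "int \<Rightarrow> 'g \<Rightarrow> 'g"
  assumes lie_data: "lie_data br fm pr"
begin

lemma br_antisym: "br x y = - br y x"
  and fm_commute: "fm x y = fm y x"
  and fm_invariant: "fm (br x y) z = fm x (br y z)"
  using lie_data unfolding lie_data_def by (elim conjE; metis)+

lemma bounded_bilinear_br: "bounded_bilinear br"
  and bounded_bilinear_fm: "bounded_bilinear fm"
  and fm_nondegenerate: "(\<And>y. fm x y = 0) \<Longrightarrow> x = 0"
  and bounded_linear_pr: "bounded_linear (pr n)"
  and pr_mod4: "n mod 4 = m mod 4 \<Longrightarrow> pr n = pr m"
  and pr_idem: "pr n (pr n x) = pr n x"
  and pr_sum: "pr 0 x + pr 1 x + pr 2 x + pr 3 x = x"
  and fm_pr_orthogonal: "(n + m) mod 4 \<noteq> 0 \<Longrightarrow> fm (pr n x) (pr m y) = 0"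
  using lie_data unfolding lie_data_def by blast+

lemma br_zero: "br 0 y = 0" "br x 0 = 0"
  using bounded_bilinear.zero_left[OF bounded_bilinear_br]
    bounded_bilinear.zero_right[OF bounded_bilinear_br] by auto

lemma fm_zero: "fm 0 y = 0" "fm x 0 = 0"
  using bounded_bilinear.zero_left[OF bounded_bilinear_fm]
    bounded_bilinear.zero_right[OF bounded_bilinear_fm] by auto

lemma vanishes_below_conv_br:
  "vanishes_below X N \<Longrightarrow> vanishes_below Y N \<Longrightarrow> vanishes_below (conv br X Y) (N+N)"
  by (rule vanishes_below_conv) (auto simp: br_zero)

lemma phi_pair_fm_commute: "phi_pair fm X Y = phi_pair fm Y X"
  by (rule phi_pair_commute) (rule fm_commute)

lemma phi_pair_add_left:
  "vanishes_below X N \<Longrightarrow> vanishes_below Y N \<Longrightarrow> vanishes_below Z N \<Longrightarrow>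
    phi_pair fm (\<lambda>n. X n + Y n) Z = phi_pair fm X Z + phi_pair fm Y Z"
  using phi_pair_lincomb_left[OF bounded_bilinear_fm, of X N Y Z 1 1] by simp

lemma phi_pair_diff_left:
  "vanishes_below X N \<Longrightarrow> vanishes_below Y N \<Longrightarrow> vanishes_below Z N \<Longrightarrow>
    phi_pair fm (\<lambda>n. X n - Y n) Z = phi_pair fm X Z - phi_pair fm Y Z"
  using phi_pair_lincomb_left[OF bounded_bilinear_fm, of X N Y Z 1 "-1"] by simp

lemma phi_pair_scaleR_left:
  "vanishes_below X N \<Longrightarrow> vanishes_below Z N \<Longrightarrow>
    phi_pair fm (\<lambda>n. c *\<^sub>R X n) Z = c *\<^sub>R phi_pair fm X Z"
  using phi_pair_lincomb_left[OF bounded_bilinear_fm, of X N X Z c 0] by simp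

lemma phi_pair_lincomb_right:
  "vanishes_below X N \<Longrightarrow> vanishes_below Y N \<Longrightarrow> vanishes_below Z N \<Longrightarrow>
    phi_pair fm Z (\<lambda>n. a *\<^sub>R X n + b *\<^sub>R Y n) = a *\<^sub>R phi_pair fm Z X + b *\<^sub>R phi_pair fm Z Y"
  using phi_pair_lincomb_left[OF bounded_bilinear_fm, of X N Y Z a b]
  by (simp add: phi_pair_fm_commute[of Z])

lemma phi_pair_diff_right:
  "vanishes_below X N \<Longrightarrow> vanishes_below Y N \<Longrightarrow> vanishes_below Z N \<Longrightarrow>
    phi_pair fm Z (\<lambda>n. X n - Y n) = phi_pair fm Z X - phi_pair fm Z Y"
  using phi_pair_diff_left[of X N Y Z] by (simp add: phi_pair_fm_commute[of Z])

lemma phi_pair_scaleR_right: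
  "vanishes_below X N \<Longrightarrow> vanishes_below Z N \<Longrightarrow>
    phi_pair fm Z (\<lambda>n. c *\<^sub>R X n) = c *\<^sub>R phi_pair fm Z X"
  using phi_pair_scaleR_left[of X N Z c] by (simp add: phi_pair_fm_commute[of Z])

lemma phi_pair_invariant:
  assumes "vanishes_below X N" "vanishes_below Y N" "vanishes_below Z N"
  shows "phi_pair fm X (conv br Y Z) = phi_pair fm (conv br X Y) Z"
proof -
  have "conv fm X (conv br Y Z) = conv fm (conv br X Y) Z"
    by (rule ext) (rule conv_invariant[OF bounded_bilinear_br bounded_bilinear_fm fm_invariant assms])
  then show ?thesis unfolding phi_pair_def by simp
qed

lemma phi_pair_bracket_self:
  assumes L: "vanishes_below L N" and Y: "vanishes_below Y N"
  shows "phi_pair fm L (conv br Y L) = 0"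
proof -
  define K where "K = min N (N+N)"
  have K: "vanishes_below L K" "vanishes_below (conv br Y L) K"
    using L vanishes_below_conv_br[OF Y L] by (auto simp: K_def elim: vanishes_below_mono)
  have "conv br L Y = (\<lambda>n. (-1) *\<^sub>R conv br Y L n)"
  proof
    fix n show "conv br L Y n = (-1) *\<^sub>R conv br Y L n"
      using conv_antisym[of br, OF br_antisym, of L Y n] by simp
  qed
  then have "phi_pair fm L (conv br Y L) = (-1) *\<^sub>R phi_pair fm L (conv br Y L)"
    using phi_pair_invariant[OF L Y L] phi_pair_fm_commute[of L "conv br L Y"]
      phi_pair_scaleR_right[OF K(2,1), of "-1"] by simp
  then show ?thesis by simp
qed

end

section \<open>Smooth periodic functions\<close>

lemma smooth_fun_const: "smooth_fun (\<lambda>t. c)"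
  unfolding smooth_fun_def
  by (rule exI[of _ "\<lambda>k. if k = 0 then (\<lambda>t. c) else (\<lambda>t. 0)"]) auto

lemma smooth_fun_bounded_linear:
  assumes h: "bounded_linear h" and f: "smooth_fun f"
  shows "smooth_fun (\<lambda>t. h (f t))"
proof -
  obtain D where D: "D 0 = f" "\<And>k t. (D k has_vector_derivative D (Suc k) t) (at t)"
    using f unfolding smooth_fun_def by blast
  show ?thesis unfolding smooth_fun_def
    by (rule exI[of _ "\<lambda>k t. h (D k t)"])
       (auto simp: D(1) intro!: bounded_linear.has_vector_derivative[OF h D(2)])
qed

lemma smooth_fun_add:
  assumes f: "smooth_fun f" and g: "smooth_fun g"
  shows "smooth_fun (\<lambda>t. f t + g t)"
proof -
  obtain D where D: "D 0 = f" "\<And>k t. (D k has_vector_derivative D (Suc k) t) (at t)"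
    using f unfolding smooth_fun_def by blast
  obtain E where E: "E 0 = g" "\<And>k t. (E k has_vector_derivative E (Suc k) t) (at t)"
    using g unfolding smooth_fun_def by blast
  show ?thesis unfolding smooth_fun_def
    by (rule exI[of _ "\<lambda>k t. D k t + E k t"])
       (auto simp: D(1) E(1) intro!: has_vector_derivative_add D(2) E(2))
qed

lemma smooth_fun_scaleR: "smooth_fun f \<Longrightarrow> smooth_fun (\<lambda>t. c *\<^sub>R f t)"
  by (rule smooth_fun_bounded_linear[OF bounded_linear_scaleR_right])

lemma smooth_fun_diff: "smooth_fun f \<Longrightarrow> smooth_fun g \<Longrightarrow> smooth_fun (\<lambda>t. f t - g t)"
  using smooth_fun_add[of f "\<lambda>t. (-1) *\<^sub>R g t"] smooth_fun_scaleR[of g "-1"] by simp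

lemma smooth_fun_has_vector_derivative:
  assumes "smooth_fun f"
  shows "(f has_vector_derivative vector_derivative f (at t)) (at t)"
proof -
  obtain D where D: "D 0 = f" "\<And>k t. (D k has_vector_derivative D (Suc k) t) (at t)"
    using assms unfolding smooth_fun_def by blast
  show ?thesis using D(2)[of 0 t] unfolding D(1) by (metis vector_derivative_at)
qed

lemma smooth_fun_vector_derivative:
  assumes "smooth_fun f"
  shows "smooth_fun (\<lambda>t. vector_derivative f (at t))"
proof -
  obtain D where D: "D 0 = f" "\<And>k t. (D k has_vector_derivative D (Suc k) t) (at t)"
    using assms unfolding smooth_fun_def by blast
  have "(\<lambda>t. vector_derivative f (at t)) = D 1"
    using D vector_derivative_at by fastforce
  then show ?thesis unfolding smooth_fun_def
    by (intro exI[of _ "\<lambda>k. D (Suc k)"]) (auto intro: D(2))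
qed

lemma smooth_fun_continuous_on: "smooth_fun f \<Longrightarrow> continuous_on S f"
  by (rule continuous_on_vector_derivative)
     (use smooth_fun_has_vector_derivative has_vector_derivative_at_within in blast)

lemma has_vector_derivative_quadratic_at_0:
  "((\<lambda>t::real. c0 + t *\<^sub>R c1 + (t*t) *\<^sub>R c2) has_vector_derivative c1) (at 0)"
  by (auto intro!: derivative_eq_intros)

lemma has_vector_derivative_sum_list:
  assumes "\<And>p. p \<in> set xs \<Longrightarrow> ((\<lambda>t. F p t) has_vector_derivative F' p) (at t)"
  shows "((\<lambda>t. sum_list (map (\<lambda>p. F p t) xs)) has_vector_derivative sum_list (map F' xs)) (at t)"
  using assms by (induction xs) (auto intro: has_vector_derivative_add)

text \<open>The \<open>k\<close>-th derivative of \<open>b (f t) (g t)\<close> is the sum over all \<open>2^k\<close> ways of distributing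
  \<open>k\<close> derivatives on the two factors; listing them avoids binomial coefficients.\<close>
fun leibniz_orders :: "nat \<Rightarrow> (nat \<times> nat) list" where
  "leibniz_orders 0 = [(0,0)]"
| "leibniz_orders (Suc k) =
     map (\<lambda>(i,j). (Suc i, j)) (leibniz_orders k) @ map (\<lambda>(i,j). (i, Suc j)) (leibniz_orders k)"

lemma smooth_fun_bounded_bilinear:
  assumes b: "bounded_bilinear b" and f: "smooth_fun f" and g: "smooth_fun g"
  shows "smooth_fun (\<lambda>t. b (f t) (g t))"
proof -
  interpret bounded_bilinear b by (rule b)
  obtain D where D: "D 0 = f" "\<And>k t. (D k has_vector_derivative D (Suc k) t) (at t)"
    using f unfolding smooth_fun_def by blast
  obtain E where E: "E 0 = g" "\<And>k t. (E k has_vector_derivative E (Suc k) t) (at t)"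
    using g unfolding smooth_fun_def by blast
  define F where "F k t = sum_list (map (\<lambda>(i,j). b (D i t) (E j t)) (leibniz_orders k))" for k t
  have "(F k has_vector_derivative F (Suc k) t) (at t)" for k t
  proof -
    have "(F k has_vector_derivative
        sum_list (map (\<lambda>(i,j). b (D i t) (E (Suc j) t) + b (D (Suc i) t) (E j t)) (leibniz_orders k)))
        (at t)"
      unfolding F_def split_def by (intro has_vector_derivative_sum_list has_vector_derivative D(2) E(2))
    also have "sum_list (map (\<lambda>(i,j). b (D i t) (E (Suc j) t) + b (D (Suc i) t) (E j t))
        (leibniz_orders k)) = F (Suc k) t"
      unfolding F_def by (simp add: sum_list_addf o_def split_def add.commute)
    finally show ?thesis .
  qed
  moreover have "F 0 = (\<lambda>t. b (f t) (g t))" unfolding F_def by (auto simp: D(1) E(1))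
  ultimately show ?thesis unfolding smooth_fun_def by blast
qed

lemma vector_derivative_periodic:
  assumes per: "\<And>s. f (s + c) = f s" and f: "smooth_fun f"
  shows "vector_derivative f (at (s + c)) = vector_derivative f (at s)"
proof -
  have "((f \<circ> (\<lambda>t. t + c)) has_vector_derivative (1 *\<^sub>R vector_derivative f (at (s + c)))) (at s)"
    by (rule vector_diff_chain_at) (auto intro!: derivative_eq_intros smooth_fun_has_vector_derivative f)
  moreover have "f \<circ> (\<lambda>t. t + c) = f" using per by (auto simp: o_def)
  ultimately show ?thesis by (simp add: vector_derivative_at)
qed

lemma periodic_of_int:
  assumes "\<And>s. g (s + c) = g s"
  shows "g (s + of_int k * c) = g s"
proof (induction k arbitrary: s rule: int_induct[where k = 0])
  case (step1 i)
  then show ?case using assms[of "s + of_int i * c"] by (simp add: algebra_simps)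
next
  case (step2 i)
  then show ?case using assms[of "s + of_int (i - 1) * c"] by (simp add: algebra_simps)
qed simp

lemma periodic_zero_if_zero_on_period:
  fixes g :: "real \<Rightarrow> 'a::zero"
  assumes per: "\<And>s. g (s + 2*pi) = g s" and zero: "\<And>s. s \<in> {0..2*pi} \<Longrightarrow> g s = 0"
  shows "g s = 0"
proof -
  define k where "k = \<lfloor>s / (2*pi)\<rfloor>"
  have "real_of_int k * (2*pi) \<le> s" "s \<le> (real_of_int k + 1) * (2*pi)"
    using floor_divide_lower[of "2*pi" s] floor_divide_upper[of "2*pi" s] pi_gt_zero
    unfolding k_def by auto
  then have "s - of_int k * (2*pi) \<in> {0..2*pi}" by (simp add: algebra_simps)
  moreover have "g s = g (s - of_int k * (2*pi))"
    using periodic_of_int[of g "2*pi" "s - of_int k * (2*pi)" k, OF per] by simp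
  ultimately show ?thesis using zero by simp
qed

lemma periodic_zero_if_integral_square_zero:
  fixes h :: "real \<Rightarrow> real"
  assumes cont: "continuous_on UNIV h" and per: "\<And>s. h (s + 2*pi) = h s"
    and int: "integral {0..2*pi} (\<lambda>s. h s * h s) = 0"
  shows "h s = 0"
proof (rule periodic_zero_if_zero_on_period[of h, OF per])
  fix s assume s: "s \<in> {0..2*pi}"
  have "continuous_on {0..2*pi} (\<lambda>s. h s * h s)"
    by (intro continuous_intros continuous_on_subset[OF cont]) auto
  then have "\<forall>x\<in>{0..2*pi}. h x * h x = 0"
    using int by (subst integral_eq_0_iff[symmetric]) auto
  then show "h s = 0" using s by simp
qed

text \<open>Testing against the smooth periodic functions \<open>Re f\<close> and \<open>Im f\<close> themselves suffices.\<close>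
lemma smooth_periodic_orthogonal_imp_zero:
  fixes f :: "real \<Rightarrow> complex"
  assumes f: "smooth_fun f" and per: "\<And>s. f (s + 2*pi) = f s"
    and orth: "\<And>c. smooth_fun c \<Longrightarrow> (\<And>s. c (s + 2*pi) = c s) \<Longrightarrow>
       integral {0..2*pi} (\<lambda>s. complex_of_real (c s) * f s) = 0"
  shows "f s = 0"
proof -
  have square_zero: "h s = 0"
    if lin: "bounded_linear p" and h: "h = (\<lambda>s. p (f s))"
      and p_mult: "\<And>r z. p (complex_of_real r * z) = r * p z" for p h
  proof (rule periodic_zero_if_integral_square_zero[of h])
    have sh: "smooth_fun h" unfolding h by (rule smooth_fun_bounded_linear[OF lin f])
    then show "continuous_on UNIV h" by (rule smooth_fun_continuous_on)
    show "h (s + 2*pi) = h s" for s by (simp add: h per)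
    have "continuous_on {0..2*pi} (\<lambda>s. complex_of_real (h s) * f s)"
      by (intro continuous_intros smooth_fun_continuous_on sh f)
    then have "integral {0..2*pi} (\<lambda>s. p (complex_of_real (h s) * f s))
        = p (integral {0..2*pi} (\<lambda>s. complex_of_real (h s) * f s))"
      using integral_linear[OF integrable_continuous_interval lin] by (simp add: o_def)
    also have "\<dots> = 0"
      using orth[OF sh] by (simp add: h per linear_0[OF bounded_linear.linear[OF lin]])
    finally show "integral {0..2*pi} (\<lambda>s. h s * h s) = 0" by (simp add: p_mult h)
  qed
  have "Re (f s) = 0" by (rule square_zero[OF bounded_linear_Re refl]) simp
  moreover have "Im (f s) = 0" by (rule square_zero[OF bounded_linear_Im refl]) simp
  ultimately show ?thesis by (simp add: complex_eq_iff)
qed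

lemma integrable_on_period:
  fixes g :: "real \<Rightarrow> 'a::banach"
  assumes "continuous_on UNIV g" shows "g integrable_on {0..2*pi}"
  by (intro integrable_continuous_interval continuous_on_subset[OF assms]) auto

section \<open>Nondegeneracy of the pairing and gradients\<close>

definition continuous_vanishing_below :: "'g::real_normed_vector loopf \<Rightarrow> int \<Rightarrow> bool"
  where "continuous_vanishing_below X N \<longleftrightarrow>
    (\<forall>s. vanishes_below (X s) N) \<and> (\<forall>n. continuous_on UNIV (\<lambda>s. X s n))"

lemma continuous_vanishing_below_mono:
  "continuous_vanishing_below X N \<Longrightarrow> M \<le> N \<Longrightarrow> continuous_vanishing_below X M"
  unfolding continuous_vanishing_below_def by (auto intro: vanishes_below_mono)

lemma continuous_vanishing_below_scaleR:
  "continuous_vanishing_below X N \<Longrightarrow> continuous_vanishing_below (\<lambda>s n. c *\<^sub>R X s n) N"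
  unfolding continuous_vanishing_below_def vanishes_below_def by (auto intro!: continuous_intros)

lemma continuous_vanishing_below_add:
  "continuous_vanishing_below X N \<Longrightarrow> continuous_vanishing_below Y N \<Longrightarrow>
    continuous_vanishing_below (\<lambda>s n. X s n + Y s n) N"
  unfolding continuous_vanishing_below_def vanishes_below_def by (auto intro!: continuous_intros)

lemma continuous_vanishing_below_pi_minus:
  assumes "continuous_vanishing_below X N"
  shows "continuous_vanishing_below (\<lambda>s. pi_minus (X s)) N"
proof -
  have "continuous_on UNIV (\<lambda>s. pi_minus (X s) n)" for n
    using assms by (cases "n < 0") (simp_all add: pi_minus_def continuous_vanishing_below_def)
  then show ?thesis
    using assms vanishes_below_pi_minus unfolding continuous_vanishing_below_def by blast
qed

lemma continuous_vanishing_below_Rop: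
  assumes "continuous_vanishing_below X N"
  shows "continuous_vanishing_below (\<lambda>s. Rop (X s)) N"
proof -
  have "continuous_on UNIV (\<lambda>s. Rop (X s) n)" for n
    using assms by (cases "n < 0")
      (simp_all add: Rop_def pi_plus_def pi_minus_def continuous_vanishing_below_def continuous_on_minus)
  then show ?thesis
    using assms vanishes_below_Rop unfolding continuous_vanishing_below_def by blast
qed

lemma in_GD:
  assumes "in_G pr X"
  shows "\<exists>N. \<forall>s. vanishes_below (X s) N" "pr n (X s n) = X s n" "smooth_fun (\<lambda>s. X s n)"
    "X (s + 2*pi) n = X s n"
  using assms unfolding in_G_def smooth_S1_def vanishes_below_def by auto

lemma in_G_continuous_vanishing_below:
  assumes "in_G pr X" "in_G pr Y" "in_G pr Z"
  obtains N where "continuous_vanishing_below X N" "continuous_vanishing_below Y N"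
    "continuous_vanishing_below Z N"
proof -
  have "\<exists>N. continuous_vanishing_below W N" if "in_G pr W" for W
    using in_GD[OF that] smooth_fun_continuous_on unfolding continuous_vanishing_below_def by metis
  then obtain N1 N2 N3 where "continuous_vanishing_below X N1" "continuous_vanishing_below Y N2"
    "continuous_vanishing_below Z N3" using assms by metis
  then show ?thesis
    using that[of "min N1 (min N2 N3)"] continuous_vanishing_below_mono by fastforce
qed

lemma conv_phi_lowest_degree:
  assumes "\<And>j. j < k \<Longrightarrow> h j = 0"
  shows "conv (\<lambda>a c. complex_of_real a * c) phi (\<lambda>n. h (n + k + 4)) 0 = 16 * h k"
proof -
  have "conv (\<lambda>a c. complex_of_real a * c) phi (\<lambda>n. h (n + k + 4)) 0
      = (\<Sum>i\<in>{4}. complex_of_real (phi i) * h (0 - i + k + 4))"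
    unfolding conv_def
  proof (rule sum.mono_neutral_left)
    show "{i. phi i \<noteq> 0 \<and> h (0 - i + k + 4) \<noteq> 0} \<subseteq> {4}"
    proof clarify
      fix i assume "phi i \<noteq> 0" "h (0 - i + k + 4) \<noteq> 0"
      then have "4 dvd i" "0 < i" "\<not> 0 - i + k + 4 < k"
        using assms unfolding phi_def by (auto split: if_splits)
      then show "i = 4" using zdvd_imp_le[of 4 i] by simp
    qed
  qed (auto simp: phi_def)
  then show ?thesis by (simp add: phi_def)
qed

context graded_lie_data
begin

lemma pr_zero: "pr n 0 = 0"
  and pr_diff: "pr n (a - b) = pr n a - pr n b"
  and pr_scaleR: "pr n (c *\<^sub>R a) = c *\<^sub>R pr n a"
  by (simp_all add: linear_simps bounded_linear_pr)

lemma in_G_scaleR: "in_G pr E \<Longrightarrow> in_G pr (\<lambda>s n. c *\<^sub>R E s n)"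
  unfolding in_G_def smooth_S1_def by (auto simp: pr_scaleR intro: smooth_fun_scaleR)

lemma in_G_diff:
  assumes "in_G pr E1" "in_G pr E2"
  shows "in_G pr (\<lambda>s n. E1 s n - E2 s n)"
proof -
  obtain N1 N2 where "\<forall>s n. n < N1 \<longrightarrow> E1 s n = 0" "\<forall>s n. n < N2 \<longrightarrow> E2 s n = 0"
    using assms unfolding in_G_def by blast
  then have "\<exists>N. \<forall>s n. n < N \<longrightarrow> E1 s n - E2 s n = 0" by (intro exI[of _ "min N1 N2"]) simp
  with assms show ?thesis
    unfolding in_G_def smooth_S1_def by (simp add: pr_diff smooth_fun_diff)
qed

lemma in_G_single_degree:
  assumes c: "smooth_fun c" "\<And>s. c (s + 2*pi) = c s" and y: "pr m y = y"
  shows "in_G pr (\<lambda>s n. if n = m then c s *\<^sub>R y else 0)"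
proof -
  have "smooth_fun (\<lambda>s. if n = m then c s *\<^sub>R y else 0)" for n
    using smooth_fun_bounded_linear[OF bounded_linear_scaleR_left c(1), of y]
    by (cases "n = m") (simp_all add: smooth_fun_const)
  then show ?thesis
    unfolding in_G_def smooth_S1_def using assms by (auto simp: pr_zero pr_scaleR intro!: exI[of _ m])
qed

lemma phi_pair_single_degree:
  assumes "\<And>j. j < k \<Longrightarrow> E j = 0"
  shows "phi_pair fm (\<lambda>n. if n = -4-k then y else 0) E = 16 * fm y (E k)"
proof -
  have "conv fm (\<lambda>n. if n = -4-k then y else 0) E = (\<lambda>n. fm y (E (n + k + 4)))"
  proof
    fix n show "conv fm (\<lambda>n. if n = -4-k then y else 0) E n = fm y (E (n + k + 4))"
      using conv_single_left[of fm "-4-k" y E n, OF fm_zero] by (simp add: algebra_simps)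
  qed
  then show ?thesis
    unfolding phi_pair_def using conv_phi_lowest_degree[of k "\<lambda>j. fm y (E j)"]
    by (simp add: assms fm_zero)
qed

lemma eq_zero_if_orthogonal_to_dual_degree:
  assumes orth: "\<And>y. pr (-4-k) y = y \<Longrightarrow> fm y x = 0" and x: "pr k x = x"
  shows "x = 0"
proof (rule fm_nondegenerate)
  fix z
  have "fm x (pr j z) = 0" for j
  proof (cases "(k + j) mod 4 = 0")
    case False
    then show ?thesis using fm_pr_orthogonal[OF False, of x z] x by simp
  next
    case True
    then have "pr j = pr (-4-k)" by (intro pr_mod4) presburger
    then have "fm (pr j z) x = 0" by (intro orth) (metis pr_idem)
    then show ?thesis by (simp add: fm_commute)
  qed
  then show "fm x z = 0"
    using pr_sum[of z] by (metis bounded_bilinear.add_right[OF bounded_bilinear_fm] add_0)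
qed

lemma continuous_vanishing_below_conv_br:
  assumes X: "continuous_vanishing_below X N" and Y: "continuous_vanishing_below Y N"
  shows "continuous_vanishing_below (\<lambda>s. conv br (X s) (Y s)) (N+N)"
  unfolding continuous_vanishing_below_def
proof (intro conjI allI)
  fix s show "vanishes_below (conv br (X s) (Y s)) (N + N)"
    using X Y by (intro vanishes_below_conv_br) (auto simp: continuous_vanishing_below_def)
next
  fix n
  have "conv br (X s) (Y s) n = (\<Sum>i\<in>{N..n-N}. br (X s i) (Y s (n-i)))" for s
    using X Y by (intro conv_eq_sum_interval) (auto simp: continuous_vanishing_below_def br_zero)
  then show "continuous_on UNIV (\<lambda>s. conv br (X s) (Y s) n)"
    using X Y unfolding continuous_vanishing_below_def
    by (simp add: continuous_on_sum bounded_bilinear.continuous_on[OF bounded_bilinear_br])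
qed

lemma integrable_phi_pair:
  assumes X: "continuous_vanishing_below X N" and Y: "continuous_vanishing_below Y N"
  shows "(\<lambda>s. phi_pair fm (X s) (Y s)) integrable_on {0..2*pi}"
proof (rule integrable_on_period)
  have "phi_pair fm (X s) (Y s) = (\<Sum>i\<in>{1..-2*N}. complex_of_real (phi i) *
      (\<Sum>j\<in>{N..-i-N}. fm (X s j) (Y s (-i-j))))" for s
    using X Y by (intro phi_pair_eq_sum) (auto simp: continuous_vanishing_below_def fm_zero)
  then show "continuous_on UNIV (\<lambda>s. phi_pair fm (X s) (Y s))"
    using X Y unfolding continuous_vanishing_below_def
    by (simp add: continuous_on_sum continuous_on_mult continuous_on_const
        bounded_bilinear.continuous_on[OF bounded_bilinear_fm])
qed

lemma Gpair_commute: "Gpair fm X Y = Gpair fm Y X"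
  unfolding Gpair_def by (simp add: phi_pair_fm_commute)

lemma Gpair_add_scaleR_left:
  assumes L: "continuous_vanishing_below L N" and Y: "continuous_vanishing_below Y N"
    and X: "continuous_vanishing_below X N"
  shows "Gpair fm (\<lambda>s n. L s n + t *\<^sub>R Y s n) X = Gpair fm L X + t *\<^sub>R Gpair fm Y X"
proof -
  have "phi_pair fm (\<lambda>n. L s n + t *\<^sub>R Y s n) (X s) = phi_pair fm (L s) (X s) + t *\<^sub>R phi_pair fm (Y s) (X s)"
    for s using phi_pair_lincomb_left[OF bounded_bilinear_fm, of "L s" N "Y s" "X s" 1 t] L Y X
    by (simp add: continuous_vanishing_below_def)
  then show ?thesis
    unfolding Gpair_def
    by (simp add: integral_add integrable_cmul integrable_phi_pair[OF L X] integrable_phi_pair[OF Y X])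
qed

lemma Gpair_scaleR_right:
  assumes "continuous_vanishing_below L N" "continuous_vanishing_below Y N"
  shows "Gpair fm Y (\<lambda>s n. c *\<^sub>R L s n) = c *\<^sub>R Gpair fm Y L"
proof -
  have "phi_pair fm (Y s) (\<lambda>n. c *\<^sub>R L s n) = c *\<^sub>R phi_pair fm (Y s) (L s)" for s
    using assms by (intro phi_pair_scaleR_right) (auto simp: continuous_vanishing_below_def)
  then show ?thesis unfolding Gpair_def by simp
qed

lemma Gpair_diff_right:
  assumes Y: "continuous_vanishing_below Y N" and D1: "continuous_vanishing_below D1 N"
    and D2: "continuous_vanishing_below D2 N"
  shows "Gpair fm Y (\<lambda>s n. D1 s n - D2 s n) = Gpair fm Y D1 - Gpair fm Y D2"
proof -
  have "phi_pair fm (Y s) (\<lambda>n. D1 s n - D2 s n) = phi_pair fm (Y s) (D1 s) - phi_pair fm (Y s) (D2 s)"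
    for s using Y D1 D2 by (intro phi_pair_diff_right) (auto simp: continuous_vanishing_below_def)
  then show ?thesis
    unfolding Gpair_def by (simp add: integral_diff integrable_phi_pair[OF Y D1] integrable_phi_pair[OF Y D2])
qed

lemma Gpair_square_add_scaleR:
  assumes L: "continuous_vanishing_below L N" and Y: "continuous_vanishing_below Y N"
  shows "Gpair fm (\<lambda>s n. L s n + t *\<^sub>R Y s n) (\<lambda>s n. L s n + t *\<^sub>R Y s n)
     = Gpair fm L L + (2*t) *\<^sub>R Gpair fm L Y + (t*t) *\<^sub>R Gpair fm Y Y"
proof -
  have LtY: "continuous_vanishing_below (\<lambda>s n. L s n + t *\<^sub>R Y s n) N"
    using L Y by (intro continuous_vanishing_below_add continuous_vanishing_below_scaleR)
  have "Gpair fm (\<lambda>s n. L s n + t *\<^sub>R Y s n) (\<lambda>s n. L s n + t *\<^sub>R Y s n)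
     = Gpair fm L (\<lambda>s n. L s n + t *\<^sub>R Y s n) + t *\<^sub>R Gpair fm Y (\<lambda>s n. L s n + t *\<^sub>R Y s n)"
    by (rule Gpair_add_scaleR_left[OF L Y LtY])
  also have "Gpair fm L (\<lambda>s n. L s n + t *\<^sub>R Y s n) = Gpair fm L L + t *\<^sub>R Gpair fm Y L"
    by (subst Gpair_commute) (rule Gpair_add_scaleR_left[OF L Y L])
  also have "Gpair fm Y (\<lambda>s n. L s n + t *\<^sub>R Y s n) = Gpair fm L Y + t *\<^sub>R Gpair fm Y Y"
    by (subst Gpair_commute) (rule Gpair_add_scaleR_left[OF L Y Y])
  also have "Gpair fm Y L = Gpair fm L Y" by (rule Gpair_commute)
  finally show ?thesis by (simp add: scaleR_add_right scaleR_conv_of_real algebra_simps)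
qed

text \<open>Induction on the degree from below: pairing with \<open>c(\<sigma>) y z^(-4-k)\<close> picks out
  \<open>16 \<langle>y, E_k\<rangle>\<close>, because \<open>phi\<close> starts with \<open>16 z^4\<close> and the lower coefficients of \<open>E\<close> already vanish.\<close>
lemma Gpair_orthogonal_imp_zero:
  assumes E: "in_G pr E" and orth: "\<And>Y. in_G pr Y \<Longrightarrow> Gpair fm Y E = 0"
  shows "E s k = 0"
proof -
  obtain N where N: "\<And>s. vanishes_below (E s) N" using in_GD(1)[OF E] by blast
  have "\<forall>j<k. \<forall>s. E s j = 0" if "N \<le> k" for k
    using that
  proof (induction k rule: int_ge_induct)
    case base
    then show ?case using N unfolding vanishes_below_def by blast
  next
    case (step k)
    have "E s k = 0" for s
    proof (rule eq_zero_if_orthogonal_to_dual_degree)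
      fix y assume y: "pr (-4-k) y = y"
      show "fm y (E s k) = 0"
      proof (rule smooth_periodic_orthogonal_imp_zero[where f = "\<lambda>s. fm y (E s k)"])
        show "smooth_fun (\<lambda>s. fm y (E s k))"
          by (rule smooth_fun_bounded_linear[OF bounded_bilinear.bounded_linear_right[OF
                bounded_bilinear_fm] in_GD(3)[OF E]])
        show "fm y (E (s + 2*pi) k) = fm y (E s k)" for s by (simp add: in_GD(4)[OF E])
      next
        fix c :: "real \<Rightarrow> real"
        assume c: "smooth_fun c" "\<And>s. c (s + 2*pi) = c s"
        let ?Y = "\<lambda>s n. if n = -4-k then c s *\<^sub>R y else 0"
        have "phi_pair fm (?Y s) (E s) = 16 * (complex_of_real (c s) * fm y (E s k))" for s
          using phi_pair_single_degree[of k "E s" "c s *\<^sub>R y"] step.IH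
          by (simp add: bounded_bilinear.scaleR_left[OF bounded_bilinear_fm] scaleR_conv_of_real)
        then have "16 * integral {0..2*pi} (\<lambda>s. complex_of_real (c s) * fm y (E s k)) = 0"
          using orth[OF in_G_single_degree[OF c y]] unfolding Gpair_def by simp
        then show "integral {0..2*pi} (\<lambda>s. complex_of_real (c s) * fm y (E s k)) = 0" by simp
      qed
    qed (rule in_GD(2)[OF E])
    then show ?case using step.IH by (metis zless_add1_eq)
  qed
  then show ?thesis by (cases "N \<le> k + 1") (use N in \<open>auto simp: vanishes_below_def\<close>)
qed

lemma in_G_zero: "in_G pr (\<lambda>s n. 0)"
  unfolding in_G_def smooth_S1_def by (simp add: pr_zero smooth_fun_const)

lemma Gpair_zero_left: "Gpair fm (\<lambda>s n. 0) Y = 0"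
  unfolding Gpair_def phi_pair_def conv_def by simp

lemma is_hgrad_unique:
  assumes D1: "is_hgrad pr fm f Lh D1" and D2: "is_hgrad pr fm f Lh D2"
  shows "D1 = D2"
proof -
  have pair_eq: "hpair fm Xh D1 = hpair fm Xh D2" if "in_Ghat pr Xh" for Xh
    using D1 D2 that unfolding is_hgrad_def by (metis vector_derivative_unique_at)
  have G1: "in_G pr (fst D1)" and G2: "in_G pr (fst D2)"
    using D1 D2 unfolding is_hgrad_def in_Ghat_def by auto
  have "snd D1 = snd D2"
    using pair_eq[of "(\<lambda>s n. 0, 1)"] in_G_zero by (simp add: in_Ghat_def hpair_def Gpair_zero_left)
  moreover have "(\<lambda>s n. fst D1 s n - fst D2 s n) s n = 0" for s n
  proof (rule Gpair_orthogonal_imp_zero[OF in_G_diff[OF G1 G2]])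
    fix Y assume Y: "in_G pr Y"
    then obtain N where "continuous_vanishing_below Y N" "continuous_vanishing_below (fst D1) N"
      "continuous_vanishing_below (fst D2) N"
      using G1 G2 by (rule in_G_continuous_vanishing_below)
    then show "Gpair fm Y (\<lambda>s n. fst D1 s n - fst D2 s n) = 0"
      using pair_eq[of "(Y, 0)"] Y by (simp add: Gpair_diff_right in_Ghat_def hpair_def)
  qed
  ultimately show ?thesis by (simp add: prod_eq_iff fun_eq_iff)
qed

lemma hgrad_eqI: "is_hgrad pr fm f Lh D \<Longrightarrow> hgrad pr fm f Lh = D"
  unfolding hgrad_def using is_hgrad_unique by blast

lemma is_hgrad_pairing:
  assumes X: "in_G pr X" and L: "in_G pr L"
  shows "is_hgrad pr fm (\<lambda>Mh. hpair fm Mh (X, 0)) (L, a) (X, 0)"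
  unfolding is_hgrad_def
proof (intro conjI allI impI)
  show "in_Ghat pr (X, 0)" using X by (simp add: in_Ghat_def)
next
  fix Yh :: "'g hat" assume "in_Ghat pr Yh"
  then obtain N where N: "continuous_vanishing_below L N" "continuous_vanishing_below (fst Yh) N"
    "continuous_vanishing_below X N"
    using L X by (auto simp: in_Ghat_def elim: in_G_continuous_vanishing_below)
  have expand: "hpair fm (hadd (L, a) (hscale t Yh)) (X, 0)
      = Gpair fm L X + t *\<^sub>R hpair fm Yh (X, 0) + (t*t) *\<^sub>R 0" for t
    by (simp add: hadd_def hscale_def hpair_def Gpair_add_scaleR_left[OF N])
  show "((\<lambda>t. hpair fm (hadd (L, a) (hscale t Yh)) (X, 0)) has_vector_derivative
      hpair fm Yh (X, 0)) (at 0)"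
    unfolding ext[OF expand] by (rule has_vector_derivative_quadratic_at_0)
qed

lemma is_hgrad_P_minus:
  assumes L: "in_G pr L"
  shows "is_hgrad pr fm (P_minus fm) (L, a) ((\<lambda>s n. -(1/2) *\<^sub>R L s n), -a/2)"
  unfolding is_hgrad_def
proof (intro conjI allI impI)
  show "in_Ghat pr ((\<lambda>s n. -(1/2) *\<^sub>R L s n), -a/2)"
    using in_G_scaleR[OF L, of "-(1/2)"] by (simp add: in_Ghat_def)
next
  fix Yh :: "'g hat" assume "in_Ghat pr Yh"
  then obtain N where N: "continuous_vanishing_below L N" "continuous_vanishing_below (fst Yh) N"
    using L by (auto simp: in_Ghat_def elim: in_G_continuous_vanishing_below)
  have pair: "hpair fm Yh ((\<lambda>s n. -(1/2) *\<^sub>R L s n), -a/2) = -(1/2) * (Gpair fm L (fst Yh) + a * snd Yh)"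
    unfolding hpair_def fst_conv snd_conv Gpair_scaleR_right[OF N] Gpair_commute[of "fst Yh"]
    by (simp add: scaleR_conv_of_real algebra_simps)
  have expand: "P_minus fm (hadd (L, a) (hscale t Yh))
      = -(1/4) * (Gpair fm L L + a * a) + t *\<^sub>R (-(1/2) * (Gpair fm L (fst Yh) + a * snd Yh))
        + (t*t) *\<^sub>R (-(1/4) * (Gpair fm (fst Yh) (fst Yh) + snd Yh * snd Yh))" for t
    by (simp add: P_minus_def hadd_def hscale_def hpair_def Gpair_square_add_scaleR[OF N]
        scaleR_conv_of_real algebra_simps)
  show "((\<lambda>t. P_minus fm (hadd (L, a) (hscale t Yh))) has_vector_derivative
      hpair fm Yh ((\<lambda>s n. -(1/2) *\<^sub>R L s n), -a/2)) (at 0)"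
    unfolding pair ext[OF expand] by (rule has_vector_derivative_quadratic_at_0)
qed

end

section \<open>The flow of \<open>P_-\<close>\<close>

lemma dsig_scaleR_coeff:
  assumes "\<And>n s. (\<lambda>t. X t n) differentiable (at s)"
  shows "dsig (\<lambda>s n. c n *\<^sub>R X s n) = (\<lambda>s n. c n *\<^sub>R dsig X s n)"
  unfolding dsig_def
proof (intro ext)
  fix s n
  show "vector_derivative (\<lambda>t. c n *\<^sub>R X t n) (at s) = c n *\<^sub>R vector_derivative (\<lambda>t. X t n) (at s)"
    using assms[of n s]
    by (intro vector_derivative_at bounded_linear.has_vector_derivative[OF bounded_linear_scaleR_right])
       (simp add: vector_derivative_works)
qed

lemma pi_minus_eq_scaleR_coeff:
  fixes X :: "int \<Rightarrow> 'a::real_vector"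
  shows "pi_minus X = (\<lambda>n. (if n < 0 then 1 else 0) *\<^sub>R X n)"
  by (simp add: fun_eq_iff pi_minus_def)

lemma Rop_eq_scaleR_coeff:
  fixes X :: "int \<Rightarrow> 'a::real_vector"
  shows "Rop (\<lambda>n. c *\<^sub>R X n) = (\<lambda>n. (if n < 0 then - c else c) *\<^sub>R X n)"
  by (simp add: fun_eq_iff Rop_def pi_plus_def pi_minus_def)

lemma dsig_pi_minus:
  assumes "\<And>n s. (\<lambda>t. X t n) differentiable (at s)"
  shows "dsig (\<lambda>t. pi_minus (X t)) = (\<lambda>s. pi_minus (dsig X s))"
  using dsig_scaleR_coeff[of X "\<lambda>n. if n < 0 then 1 else 0", OF assms]
  unfolding pi_minus_eq_scaleR_coeff by simp

lemma dsig_scaleR: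
  assumes "\<And>n s. (\<lambda>t. X t n) differentiable (at s)"
  shows "dsig (\<lambda>s n. c *\<^sub>R X s n) = (\<lambda>s n. c *\<^sub>R dsig X s n)"
  by (rule dsig_scaleR_coeff[of X "\<lambda>_. c", OF assms])

lemma dsig_Rop_scaleR:
  assumes "\<And>n s. (\<lambda>t. X t n) differentiable (at s)"
  shows "dsig (\<lambda>s. Rop (\<lambda>n. c *\<^sub>R X s n)) = (\<lambda>s. Rop (\<lambda>n. c *\<^sub>R dsig X s n))"
  unfolding Rop_eq_scaleR_coeff by (rule dsig_scaleR_coeff[OF assms])

lemma continuous_vanishing_below_dsig:
  assumes X: "in_G pr X" and low: "\<And>s n. n < N \<Longrightarrow> X s n = 0"
  shows "continuous_vanishing_below (dsig X) N"
  using low unfolding continuous_vanishing_below_def vanishes_below_def dsig_def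
  by (auto intro!: smooth_fun_continuous_on smooth_fun_vector_derivative in_GD(3)[OF X])

context graded_lie_data
begin

lemma phi_pair_R_bracket:
  assumes L: "vanishes_below L N" and X: "vanishes_below X N"
  shows "phi_pair fm L (\<lambda>n. conv br (Rop X) (\<lambda>n. -(1/2) *\<^sub>R L n) n
                          + conv br X (Rop (\<lambda>n. -(1/2) *\<^sub>R L n)) n)
       = phi_pair fm (conv br (pi_minus L) L) X"
proof -
  define K where "K = min N (N+N)"
  define V where "V = (\<lambda>n. (-(1/2)) *\<^sub>R conv br X L n + 1 *\<^sub>R conv br X (pi_minus L) n)"
  note bounds = L X vanishes_below_Rop[OF X] vanishes_below_pi_minus[OF L]
  have br_K: "vanishes_below (conv br A B) K" if "vanishes_below A N" "vanishes_below B N" for A B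
    using vanishes_below_conv_br[OF that] by (rule vanishes_below_mono) (simp add: K_def)
  have K: "vanishes_below L K" "vanishes_below (conv br (Rop X) L) K"
    "vanishes_below (conv br X L) K" "vanishes_below (conv br X (pi_minus L)) K"
    using vanishes_below_mono[OF L, of K] br_K bounds by (simp_all add: K_def)
  have V_K: "vanishes_below V K" unfolding V_def by (rule vanishes_below_lincomb[OF K(3,4)])
  have first: "conv br (Rop X) (\<lambda>n. -(1/2) *\<^sub>R L n) n = (-(1/2)) *\<^sub>R conv br (Rop X) L n" for n
    using conv_lincomb_right[OF bounded_bilinear_br, of "Rop X" N L L "-(1/2)" 0 n] bounds by simp
  have second: "conv br X (Rop (\<lambda>n. -(1/2) *\<^sub>R L n)) n = V n" for n
    unfolding Rop_scaleR V_def
    using conv_lincomb_right[OF bounded_bilinear_br, of X N L "pi_minus L" "-(1/2)" 1 n] bounds by simp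
  have "phi_pair fm L (\<lambda>n. conv br (Rop X) (\<lambda>n. -(1/2) *\<^sub>R L n) n
                              + conv br X (Rop (\<lambda>n. -(1/2) *\<^sub>R L n)) n)
      = phi_pair fm L (\<lambda>n. (-(1/2)) *\<^sub>R conv br (Rop X) L n + 1 *\<^sub>R V n)"
    by (simp only: first second) simp
  also have "\<dots> = (-(1/2)) *\<^sub>R phi_pair fm L (conv br (Rop X) L) + 1 *\<^sub>R phi_pair fm L V"
    by (rule phi_pair_lincomb_right[OF K(2) V_K K(1)])
  also have "phi_pair fm L V = (-(1/2)) *\<^sub>R phi_pair fm L (conv br X L)
      + 1 *\<^sub>R phi_pair fm L (conv br X (pi_minus L))"
    unfolding V_def by (rule phi_pair_lincomb_right[OF K(3,4,1)])
  also have "(-(1/2)) *\<^sub>R phi_pair fm L (conv br (Rop X) L) + 1 *\<^sub>R (\<dots>)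
      = phi_pair fm L (conv br X (pi_minus L))"
    using phi_pair_bracket_self[OF L vanishes_below_Rop[OF X]] phi_pair_bracket_self[OF L X] by simp
  also have "\<dots> = phi_pair fm (conv br (pi_minus L) L) X"
    using phi_pair_invariant[of L N X "pi_minus L"] phi_pair_invariant[of "pi_minus L" N L X] bounds
      phi_pair_fm_commute[of "conv br L X" "pi_minus L"] by simp
  finally show ?thesis .
qed

lemma phi_pair_R_central:
  assumes l: "vanishes_below l (-3)" and X: "vanishes_below X N" and N: "N \<le> -3"
  shows "phi_pair fm (Rop X) (\<lambda>n. -(1/2) *\<^sub>R l n) + phi_pair fm X (Rop (\<lambda>n. -(1/2) *\<^sub>R l n))
       = phi_pair fm (pi_minus l) X"
proof -
  have lN: "vanishes_below l N" using l N by (rule vanishes_below_mono)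
  note bounds = lN X vanishes_below_Rop[OF X] vanishes_below_pi_minus[OF X]
    vanishes_below_pi_plus[OF X] vanishes_below_pi_minus[OF lN]
  have "vanishes_below (pi_plus X) 0" by (simp add: vanishes_below_def pi_plus_def)
  then have "vanishes_below (conv fm (pi_plus X) l) (0 + -3)"
    by (rule vanishes_below_conv[OF _ l]) (simp_all add: fm_zero)
  then have plus: "phi_pair fm (pi_plus X) l = 0"
    by (intro phi_pair_eq_0_if_vanishes_below) simp
  have "phi_pair fm (Rop X) (\<lambda>n. -(1/2) *\<^sub>R l n) = (-(1/2)) *\<^sub>R phi_pair fm (Rop X) l"
    by (rule phi_pair_scaleR_right[OF lN vanishes_below_Rop[OF X]])
  also have "phi_pair fm (Rop X) l = phi_pair fm (pi_plus X) l - phi_pair fm (pi_minus X) l"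
    unfolding Rop_def by (rule phi_pair_diff_left[OF vanishes_below_pi_plus[OF X] vanishes_below_pi_minus[OF X] lN])
  finally have R_left: "phi_pair fm (Rop X) (\<lambda>n. -(1/2) *\<^sub>R l n)
      = (-(1/2)) *\<^sub>R (phi_pair fm (pi_plus X) l - phi_pair fm (pi_minus X) l)" .
  have "phi_pair fm X (Rop (\<lambda>n. -(1/2) *\<^sub>R l n))
      = (-(1/2)) *\<^sub>R phi_pair fm X l + (-2 * -(1/2)) *\<^sub>R phi_pair fm X (pi_minus l)"
    unfolding Rop_scaleR by (rule phi_pair_lincomb_right[OF lN vanishes_below_pi_minus[OF lN] X])
  also have "phi_pair fm X l = phi_pair fm (pi_plus X) l + phi_pair fm (pi_minus X) l"
    by (subst pi_plus_add_pi_minus)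
       (rule phi_pair_add_left[OF vanishes_below_pi_plus[OF X] vanishes_below_pi_minus[OF X] lN])
  also have "phi_pair fm X (pi_minus l) = phi_pair fm (pi_minus l) X" by (rule phi_pair_fm_commute)
  finally show ?thesis using R_left plus by (simp add: algebra_simps)
qed

lemma phi_pair_flow_pointwise:
  assumes L: "vanishes_below L N" and X: "vanishes_below X N" and l: "vanishes_below l (-3)"
    and N: "N \<le> -3"
  shows "phi_pair fm (\<lambda>n. pi_minus l n + conv br (pi_minus L) L n) X
    = 2 * phi_pair fm L (\<lambda>n. (1/2) *\<^sub>R (conv br (Rop X) (\<lambda>n. -(1/2) *\<^sub>R L n) n
                                        + conv br X (Rop (\<lambda>n. -(1/2) *\<^sub>R L n)) n))
      + (phi_pair fm (Rop X) (\<lambda>n. -(1/2) *\<^sub>R l n) + phi_pair fm X (Rop (\<lambda>n. -(1/2) *\<^sub>R l n)))"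
proof -
  define bracket where "bracket = (\<lambda>n. conv br (Rop X) (\<lambda>n. -(1/2) *\<^sub>R L n) n
    + conv br X (Rop (\<lambda>n. -(1/2) *\<^sub>R L n)) n)"
  have NN: "vanishes_below W (N+N)" if "vanishes_below W N" for W
    using that by (rule vanishes_below_mono) (use N in simp)
  have LL: "vanishes_below (conv br (pi_minus L) L) (N+N)"
    by (rule vanishes_below_conv_br[OF vanishes_below_pi_minus[OF L] L])
  have "vanishes_below (\<lambda>n. -(1/2) *\<^sub>R L n) N"
    using L by (simp add: vanishes_below_def)
  then have "vanishes_below bracket (N+N)"
    using vanishes_below_conv_br[OF vanishes_below_Rop[OF X]] vanishes_below_conv_br[OF X vanishes_below_Rop]
    unfolding bracket_def vanishes_below_def by simp
  then have "phi_pair fm L (\<lambda>n. (1/2) *\<^sub>R bracket n) = (1/2) *\<^sub>R phi_pair fm L bracket"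
    by (rule phi_pair_scaleR_right[OF _ NN[OF L]])
  also have "phi_pair fm L bracket = phi_pair fm (conv br (pi_minus L) L) X"
    unfolding bracket_def by (rule phi_pair_R_bracket[OF L X])
  finally have "2 * phi_pair fm L (\<lambda>n. (1/2) *\<^sub>R bracket n) = phi_pair fm (conv br (pi_minus L) L) X"
    by (simp add: scaleR_conv_of_real mult.commute)
  moreover have "phi_pair fm (\<lambda>n. pi_minus l n + conv br (pi_minus L) L n) X
      = phi_pair fm (pi_minus l) X + phi_pair fm (conv br (pi_minus L) L) X"
    using NN[OF vanishes_below_pi_minus[OF vanishes_below_mono[OF l N]]] LL NN[OF X]
    by (rule phi_pair_add_left)
  ultimately show ?thesis
    using phi_pair_R_central[OF l X N] unfolding bracket_def by simp
qed

lemma flow_identity: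
  assumes L: "in_G pr L" and L_low: "\<And>s n. n < -3 \<Longrightarrow> L s n = 0" and X: "in_G pr X"
  shows "Gpair fm (\<lambda>s n. dsig (\<lambda>t. pi_minus (L t)) s n + Gbr br (\<lambda>t. pi_minus (L t)) L s n) X
     = Rpoisson br fm pr (\<lambda>Mh. hpair fm Mh (X, 0)) (P_minus fm) (L, 1)"
proof -
  define l where "l = dsig L"
  have diff: "(\<lambda>t. L t n) differentiable (at s)" for n s
    using in_GD(3)[OF L] smooth_fun_has_vector_derivative by (auto simp: vector_derivative_works)
  have l: "continuous_vanishing_below l (-3)"
    unfolding l_def using L L_low by (rule continuous_vanishing_below_dsig)
  obtain N0 where N0: "continuous_vanishing_below L N0" "continuous_vanishing_below X N0"
    using L X X by (rule in_G_continuous_vanishing_below)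
  define N where "N = min N0 (-3)"
  have N: "continuous_vanishing_below L N" "continuous_vanishing_below X N"
    "continuous_vanishing_below l N" "N \<le> -3"
    using N0 l by (auto simp: N_def intro: continuous_vanishing_below_mono)
  define bracket where "bracket = (\<lambda>s n. conv br (Rop (X s)) (\<lambda>n. -(1/2) *\<^sub>R L s n) n
    + conv br (X s) (Rop (\<lambda>n. -(1/2) *\<^sub>R L s n)) n)"
  define g0 where "g0 s = phi_pair fm (\<lambda>n. pi_minus (l s) n + conv br (pi_minus (L s)) (L s) n) (X s)" for s
  define g1 where "g1 s = phi_pair fm (L s) (\<lambda>n. (1/2) *\<^sub>R bracket s n)" for s
  define g2 where "g2 s = phi_pair fm (Rop (X s)) (\<lambda>n. -(1/2) *\<^sub>R l s n)" for s
  define g3 where "g3 s = phi_pair fm (X s) (Rop (\<lambda>n. -(1/2) *\<^sub>R l s n))" for s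
  have NN: "continuous_vanishing_below W (N+N)" if "continuous_vanishing_below W N" for W
    using that by (rule continuous_vanishing_below_mono) (use N(4) in simp)
  have cont: "continuous_vanishing_below (\<lambda>s. conv br (pi_minus (L s)) (L s)) (N+N)"
    "continuous_vanishing_below bracket (N+N)"
    unfolding bracket_def
    by (intro continuous_vanishing_below_conv_br continuous_vanishing_below_pi_minus
        continuous_vanishing_below_Rop continuous_vanishing_below_scaleR continuous_vanishing_below_add N)+
  have int: "g0 integrable_on {0..2*pi}" "g1 integrable_on {0..2*pi}"
    "g2 integrable_on {0..2*pi}" "g3 integrable_on {0..2*pi}"
    unfolding g0_def g1_def g2_def g3_def
    by (rule integrable_phi_pair[OF continuous_vanishing_below_add[OF
          NN[OF continuous_vanishing_below_pi_minus[OF N(3)]] cont(1)] NN[OF N(2)]],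
      rule integrable_phi_pair[OF NN[OF N(1)] continuous_vanishing_below_scaleR[OF cont(2)]],
      rule integrable_phi_pair[OF continuous_vanishing_below_Rop[OF N(2)]
          continuous_vanishing_below_scaleR[OF N(3)]],
      rule integrable_phi_pair[OF N(2) continuous_vanishing_below_Rop[OF
          continuous_vanishing_below_scaleR[OF N(3)]]])
  have pointwise: "g0 s = 2 * g1 s + (g2 s + g3 s)" for s
    unfolding g0_def g1_def g2_def g3_def bracket_def
    using N l by (intro phi_pair_flow_pointwise) (auto simp: continuous_vanishing_below_def)
  have "integral {0..2*pi} g0
      = 2 * integral {0..2*pi} g1 + (integral {0..2*pi} g2 + integral {0..2*pi} g3)"
    unfolding pointwise using int by (simp add: integral_add integrable_add integral_mult_right integrable_on_cmult_left)
  also have "\<dots> = Rpoisson br fm pr (\<lambda>Mh. hpair fm Mh (X, 0)) (P_minus fm) (L, 1)"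
    unfolding Rpoisson_def hgrad_eqI[OF is_hgrad_pairing[OF X L]] hgrad_eqI[OF is_hgrad_P_minus[OF L]]
    unfolding hRbr_def hR_def hbr_def hadd_def hscale_def hpair_def omega_def GR_def Gbr_def
      dsig_scaleR[OF diff] dsig_Rop_scaleR[OF diff] fst_conv snd_conv Gpair_def
      g1_def g2_def g3_def bracket_def l_def
    by (simp add: scaleR_conv_of_real)
  finally show ?thesis
    unfolding Gpair_def dsig_pi_minus[OF diff] Gbr_def g0_def l_def .
qed

end

section \<open>The Lax matrix\<close>

definition lax_numerator :: "('g \<Rightarrow> 'g \<Rightarrow> 'g) \<Rightarrow> (int \<Rightarrow> 'g \<Rightarrow> 'g) \<Rightarrow> (real \<Rightarrow> 'g) \<Rightarrow> (real \<Rightarrow> 'g) \<Rightarrow>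
    'g::real_normed_vector loopf"
  where "lax_numerator br pr A Pim s k = (if 1 \<le> k then real_of_int k *\<^sub>R pr k (A s)
     + 2 *\<^sub>R pr k (vector_derivative Pim (at s) - br (A s) (Pim s)) else 0)"

text \<open>Multiplication by \<open>4 phi^-1 = (z^4 + z^-4)/4 - 1/2\<close>.\<close>
lemma lax_eq_shifts:
  "lax br pr A Pim s n = (1/4) *\<^sub>R lax_numerator br pr A Pim s (n - 4)
     + (-1/2) *\<^sub>R lax_numerator br pr A Pim s n + (1/4) *\<^sub>R lax_numerator br pr A Pim s (n + 4)"
proof -
  let ?M = "lax_numerator br pr A Pim s"
  have "lax br pr A Pim s n = 4 *\<^sub>R (\<Sum>i\<in>{i. phi_inv i \<noteq> 0 \<and> ?M (n - i) \<noteq> 0}. phi_inv i *\<^sub>R ?M (n - i))"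
    unfolding lax_def conv_def lax_numerator_def by simp
  also have "(\<Sum>i\<in>{i. phi_inv i \<noteq> 0 \<and> ?M (n - i) \<noteq> 0}. phi_inv i *\<^sub>R ?M (n - i))
      = (\<Sum>i\<in>{-4,0,4}. phi_inv i *\<^sub>R ?M (n - i))"
    by (rule sum.mono_neutral_left) (auto simp: phi_inv_def split: if_splits)
  finally show ?thesis by (simp add: phi_inv_def scaleR_add_right algebra_simps)
qed

lemma lax_vanishes_below: "n < -3 \<Longrightarrow> lax br pr A Pim s n = 0"
  unfolding lax_eq_shifts by (simp add: lax_numerator_def)

context graded_lie_data
begin

lemma pr_lax_numerator:
  "n mod 4 = k mod 4 \<Longrightarrow> pr n (lax_numerator br pr A Pim s k) = lax_numerator br pr A Pim s k"
  using pr_mod4[of n k] by (simp add: lax_numerator_def linear_simps bounded_linear_pr pr_idem)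

lemma in_G_lax:
  assumes A: "smooth_S1 A" and Pim: "smooth_S1 Pim"
  shows "in_G pr (lax br pr A Pim)"
proof -
  have A': "smooth_fun A" "\<And>s. A (s + 2*pi) = A s"
    and Pim': "smooth_fun Pim" "\<And>s. Pim (s + 2*pi) = Pim s"
    using A Pim unfolding smooth_S1_def by auto
  have "smooth_fun (\<lambda>s. lax_numerator br pr A Pim s k)" for k
    unfolding lax_numerator_def
    by (cases "1 \<le> k") (simp_all add: smooth_fun_const smooth_fun_add smooth_fun_scaleR smooth_fun_diff
        smooth_fun_bounded_linear[OF bounded_linear_pr] smooth_fun_vector_derivative
        smooth_fun_bounded_bilinear[OF bounded_bilinear_br] A' Pim')
  moreover have "lax_numerator br pr A Pim (s + 2*pi) k = lax_numerator br pr A Pim s k" for s k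
    unfolding lax_numerator_def by (simp add: A' Pim' vector_derivative_periodic[OF Pim'(2,1)])
  ultimately have "smooth_S1 (\<lambda>s. lax br pr A Pim s n)" for n
    unfolding smooth_S1_def lax_eq_shifts by (auto intro!: smooth_fun_add smooth_fun_diff smooth_fun_scaleR)
  moreover have "pr n (lax br pr A Pim s n) = lax br pr A Pim s n" for s n
  proof -
    have "(n - 4) mod 4 = n mod 4" "(n + 4) mod 4 = n mod 4" by presburger+
    then show ?thesis
      unfolding lax_eq_shifts
      by (simp add: linear_simps bounded_linear_pr pr_lax_numerator del: minus_mod_self2)
  qed
  ultimately show ?thesis
    unfolding in_G_def using lax_vanishes_below by blast
qed

end

theorem lemma3:
  fixes br :: "'g::real_normed_vector \<Rightarrow> 'g \<Rightarrow> 'g"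
    and fm :: "'g \<Rightarrow> 'g \<Rightarrow> complex"
    and pr :: "int \<Rightarrow> 'g \<Rightarrow> 'g"
    and A Pim :: "real \<Rightarrow> 'g"
  assumes "lie_data br fm pr"
    and "smooth_S1 A" and "smooth_S1 Pim"
  shows "\<forall>X. in_G pr X \<longrightarrow>
     Gpair fm (\<lambda>s n. dsig (\<lambda>t. pi_minus (lax br pr A Pim t)) s n
                     + Gbr br (\<lambda>t. pi_minus (lax br pr A Pim t)) (lax br pr A Pim) s n) X
     = Rpoisson br fm pr (\<lambda>Mh. hpair fm Mh (X, 0)) (P_minus fm) (lax br pr A Pim, 1)"
proof -
  interpret graded_lie_data br fm pr by (rule graded_lie_data.intro) fact
  show ?thesis
    using flow_identity[OF in_G_lax[OF assms(2,3)] lax_vanishes_below] by blast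
qed

end
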